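(* Let $t$ be the Thue-Morse word. For every occurrence $t(i..j]$ in $t$ of a palindrome of positive length $j-i\notin\{1,3\}$, there is $m\in\{0,1,2,3\}$ such that $i\equiv m \pmod 4$ and $j\equiv 4-m \pmod 4$; equivalently, $i+j\equiv 0 \pmod 4$.
   Context: The Thue-Morse word $t=t[1]t[2]\cdots=abbabaabbaababba\cdots$ is the fixed point starting with $a$ of the morphism $\tau: a\mapsto abba,\ b\mapsto baab$. For $0\le i\le j$, $t(i..j]$ denotes the factor $t[i+1]t[i+2]\cdots t[j]$. A palindrome is a word $p=p[1]\cdots p[n]$ with $p[i]=p[n-i+1]$ for all $i$. *)

theory Defs
  imports Main
begin

datatype letter = a | b

fun tau :: "letter \<Rightarrow> letter list" where
  "tau a = [a, b, b, a]"
| "tau b = [b, a, a, b]"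

definition tau_list :: "letter list \<Rightarrow> letter list" where
  "tau_list w = concat (map tau w)"

definition tm_prefix :: "nat \<Rightarrow> letter list" where
  "tm_prefix k = (tau_list ^^ k) [a]"

text \<open>The Thue-Morse word, 1-indexed: t n = t[n] for n \<ge> 1 (t 0 is a junk value).
  It is the fixed point of tau starting with a, i.e. the limit of tau^k(a).\<close>
definition t :: "nat \<Rightarrow> letter" where
  "t n = tm_prefix n ! (n - 1)"

text \<open>The factor t(i..j] = t[i+1] ... t[j].\<close>
definition factor :: "nat \<Rightarrow> nat \<Rightarrow> letter list" where
  "factor i j = map t [Suc i..<Suc j]"

definition palindrome :: "'x list \<Rightarrow> bool" where
  "palindrome p \<longleftrightarrow> (\<forall>k<length p. p ! k = p ! (length p - 1 - k))"

end

theory Submission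
  imports Defs
begin

text \<open>Indexing from 0, the Thue-Morse word is the sequence u with u(2n) = u(n) and
  u(2n+1) = flip(u(n)). Hence u(2m) \<noteq> u(2m+1), so two equal adjacent letters u(n) = u(n+1)
  force n to be odd, and no letter occurs three times in a row. The centre of an even
  palindrome t(i..j] is such a pair of equal letters at positions (i+j)/2 - 1 and (i+j)/2,
  so (i+j)/2 is even. An odd palindrome of length at least 5 would contain a palindrome
  u(c) .. u(c+4) of length 5; reducing it by the recursion yields three equal consecutive
  letters of u, which is impossible.\<close>

fun flip :: "letter \<Rightarrow> letter" where
  "flip a = b"
| "flip b = a"

lemma flip_neq [simp]: "flip x \<noteq> x" "x \<noteq> flip x"
  by (cases x; simp)+

lemma flip_flip [simp]: "flip (flip x) = x"
  by (cases x) simp_all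

lemma flip_inject [simp]: "flip x = flip y \<longleftrightarrow> x = y"
  by (cases x; cases y) auto

fun thue_morse :: "nat \<Rightarrow> letter" where
  "thue_morse n =
    (if n = 0 then a
     else if even n then thue_morse (n div 2) else flip (thue_morse (n div 2)))"

declare thue_morse.simps [simp del]

lemma thue_morse_even [simp]: "thue_morse (2 * n) = thue_morse n"
  by (cases "n = 0") (simp_all add: thue_morse.simps)

lemma thue_morse_odd [simp]: "thue_morse (Suc (2 * n)) = flip (thue_morse n)"
  by (simp add: thue_morse.simps)

lemma length_tau [simp]: "length (tau x) = 4"
  by (cases x) auto

lemma length_tau_list [simp]: "length (tau_list w) = 4 * length w"
  by (induction w) (simp_all add: tau_list_def)

lemma nth_tau_list:
  "n < 4 * length w \<Longrightarrow> tau_list w ! n = tau (w ! (n div 4)) ! (n mod 4)"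
proof (induction w arbitrary: n)
  case (Cons x w)
  show ?case
  proof (cases "n < 4")
    case False
    then have "n div 4 = Suc ((n - 4) div 4)" "n mod 4 = (n - 4) mod 4"
      by (simp_all add: div_if mod_if)
    with False Cons show ?thesis
      by (simp add: tau_list_def nth_append)
  qed (simp add: tau_list_def nth_append)
qed simp

lemma thue_morse_4_mult_add:
  assumes "r < 4"
  shows "thue_morse (4 * q + r) = tau (thue_morse q) ! r"
proof -
  have "thue_morse (4 * q) = thue_morse q"
    using thue_morse_even[of "2 * q"] by simp
  moreover have "thue_morse (4 * q + 1) = flip (thue_morse q)"
    using thue_morse_odd[of "2 * q"] by simp
  moreover have "thue_morse (4 * q + 2) = flip (thue_morse q)"
    using thue_morse_even[of "Suc (2 * q)"] by simp
  moreover have "thue_morse (4 * q + 3) = thue_morse q"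
    using thue_morse_odd[of "Suc (2 * q)"] by (simp add: numeral_3_eq_3)
  moreover have "r = 0 \<or> r = 1 \<or> r = 2 \<or> r = 3"
    using assms by auto
  ultimately show ?thesis
    by (elim disjE; cases "thue_morse q") simp_all
qed

lemma nth_tm_prefix: "n < 4 ^ k \<Longrightarrow> tm_prefix k ! n = thue_morse n"
proof (induction k arbitrary: n)
  case 0
  then show ?case
    by (simp add: tm_prefix_def thue_morse.simps)
next
  case (Suc k)
  have "tm_prefix (Suc k) = tau_list (tm_prefix k)"
    by (simp add: tm_prefix_def)
  moreover have "length (tm_prefix k) = 4 ^ k"
    by (induction k) (simp_all add: tm_prefix_def)
  ultimately show ?case
    using Suc thue_morse_4_mult_add[of "n mod 4" "n div 4"]
    by (simp add: nth_tau_list less_mult_imp_div_less)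
qed

lemma t_Suc: "t (Suc n) = thue_morse n"
proof -
  have "n < 4 ^ Suc n"
    by (induction n) simp_all
  then show ?thesis
    by (simp add: t_def nth_tm_prefix)
qed

lemma factor_eq_map_thue_morse: "factor i j = map thue_morse [i..<j]"
  by (simp add: factor_def map_Suc_upt[symmetric] t_Suc comp_def del: upt_Suc)

lemma thue_morse_eq_Suc_imp_odd:
  assumes "thue_morse n = thue_morse (Suc n)"
  shows "odd n"
proof
  assume "even n"
  then obtain m where "n = 2 * m" ..
  with assms show False by simp
qed

lemma thue_morse_no_cube:
  "\<not> (thue_morse n = thue_morse (n + 1) \<and> thue_morse (n + 1) = thue_morse (n + 2))"
  using thue_morse_eq_Suc_imp_odd[of n] thue_morse_eq_Suc_imp_odd[of "Suc n"] by auto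

lemma thue_morse_no_palindrome_5:
  "\<not> (thue_morse n = thue_morse (n + 4) \<and> thue_morse (n + 1) = thue_morse (n + 3))"
proof
  assume pal: "thue_morse n = thue_morse (n + 4) \<and> thue_morse (n + 1) = thue_morse (n + 3)"
  obtain m where "n = 2 * m \<or> n = 2 * m + 1"
    by (metis evenE oddE)
  then have "thue_morse m = thue_morse (m + 1) \<and> thue_morse (m + 1) = thue_morse (m + 2)"
  proof
    assume n: "n = 2 * m"
    then have "n + 4 = 2 * (m + 2)" "n + 1 = Suc (2 * m)" "n + 3 = Suc (2 * (m + 1))"
      by simp_all
    with pal n show ?thesis
      by (simp only: thue_morse_even thue_morse_odd flip_inject) auto
  next
    assume "n = 2 * m + 1"
    then have "n = Suc (2 * m)" "n + 4 = Suc (2 * (m + 2))" "n + 1 = 2 * (m + 1)"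
      "n + 3 = 2 * (m + 2)"
      by simp_all
    with pal show ?thesis
      by (simp only: thue_morse_even thue_morse_odd flip_inject)
  qed
  with thue_morse_no_cube show False by blast
qed

lemma palindrome_factor_thue_morse:
  assumes "palindrome (factor i j)" and "k < j - i"
  shows "thue_morse (i + k) = thue_morse (j - Suc k)"
proof -
  have "i + (j - i - 1 - k) = j - Suc k"
    using assms(2) by simp
  with assms show ?thesis
    by (simp add: palindrome_def factor_eq_map_thue_morse)
qed

lemma even_palindrome_factor_4_dvd:
  assumes "palindrome (factor i j)" and "i < j" and "even (j - i)"
  shows "4 dvd i + j"
proof -
  from assms(3) obtain h where h: "j - i = 2 * h" ..
  with assms(2) have "h > 0"
    by simp
  with h have "j - Suc (h - 1) = Suc (i + (h - 1))"
    by simp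
  with palindrome_factor_thue_morse[OF assms(1), of "h - 1"] h \<open>h > 0\<close>
  have "odd (i + (h - 1))"
    by (intro thue_morse_eq_Suc_imp_odd) simp
  then obtain q where "i + (h - 1) = 2 * q + 1" ..
  with h \<open>h > 0\<close> assms(2) have "i + j = 4 * (q + 1)"
    by simp
  then show ?thesis
    by simp
qed

lemma odd_palindrome_factor_length:
  assumes "palindrome (factor i j)" and "odd (j - i)"
  shows "j - i \<in> {1, 3}"
proof (rule ccontr)
  assume "j - i \<notin> {1, 3}"
  moreover from assms(2) obtain k where k: "j - i = 2 * k + 1" ..
  ultimately have "k \<noteq> 0" and "k \<noteq> 1"
    by auto
  define h where "h = k - 2"
  with k \<open>k \<noteq> 0\<close> \<open>k \<noteq> 1\<close> have j: "j = i + h + h + 5"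
    by simp
  then have "h < j - i" "h + 1 < j - i" "j - Suc h = i + h + 4" "j - Suc (h + 1) = i + h + 3"
    by simp_all
  then have "thue_morse (i + h) = thue_morse (i + h + 4)"
    and "thue_morse (i + h + 1) = thue_morse (i + h + 3)"
    using palindrome_factor_thue_morse[OF assms(1), of h]
      palindrome_factor_thue_morse[OF assms(1), of "h + 1"]
    by (simp_all add: add.assoc)
  then show False
    using thue_morse_no_palindrome_5 by blast
qed

lemma mod_eq_diff_mod_if_dvd_add:
  fixes i j m :: nat
  assumes "m dvd i + j"
  shows "j mod m = (m - i mod m) mod m"
proof (cases "m = 0")
  case False
  have "m - i mod m + i = m * Suc (i div m)"
    using False mod_less_eq_dividend[of i m] mod_less_divisor[of m i]
    by (simp add: minus_mod_eq_mult_div[symmetric])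
  with assms have "(j + i) mod m = (m - i mod m + i) mod m"
    by (simp add: add.commute)
  then show ?thesis
    using nat_mod_eq_iff by force
qed (use assms in simp)

theorem proposition5:
  fixes i j :: nat
  assumes "i < j"
    and "j - i \<notin> {1, 3}"
    and "palindrome (factor i j)"
  shows "\<exists>m \<in> {0,1,2,3::nat}. i mod 4 = m \<and> j mod 4 = (4 - m) mod 4"
proof -
  have "even (j - i)"
    using odd_palindrome_factor_length[OF assms(3)] assms(2) by blast
  with assms(3,1) have "4 dvd i + j"
    by (rule even_palindrome_factor_4_dvd)
  then have "j mod 4 = (4 - i mod 4) mod 4"
    by (rule mod_eq_diff_mod_if_dvd_add)
  then show ?thesis
    by (intro bexI[of _ "i mod 4"]) auto
qed

end
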